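(* Let $d\le\ell$ be positive integers and $L\ge2$. For any $(p,n,d)$-non-backtracking multi-labelling of an $L$-graph in which every $p$-vertex carries $d$ $p$-labels, with $\tilde r$ distinct $n$-labels and $\tilde c$ distinct $p$-labels, $$\tilde r+\frac{\tilde c}{\ell}\le\frac L2+\frac{dL}{2\ell}.$$
   Context: An $L$-graph is a cycle with $2L$ vertices alternating between $n$-vertices and $p$-vertices. A $(p,n,d)$-non-backtracking multi-labelling assigns an $n$-label in $[n]$ to each $n$-vertex and a tuple of $d$ $p$-labels in $[p]$ to each $p$-vertex, with $d\le\ell$, such that: (i) the $n$-label of each $n$-vertex differs from those of the $n$-vertices immediately preceding and following it, and the tuple of each $p$-vertex differs (as a set, i.e. up to reordering) from those of the $p$-vertices immediately preceding and following it; (ii) for each $n$-label $i$ and $p$-label $j$ there is an even number of edges whose $n$-endpoint is labelled $i$ and whose $p$-endpoint's tuple contains $j$. *)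

theory Defs
  imports Complex_Main
begin

text \<open>An L-graph: a cycle n_0 - p_0 - n_1 - p_1 - ... - n_{L-1} - p_{L-1} - n_0 with 2L vertices.
  n-vertex k is labelled a k, p-vertex k carries the tuple b k (a list of length d).
  Edges: (n_k, p_k) and (n_{(k+1) mod L}, p_k) for k < L.\<close>

definition edge_count :: "nat \<Rightarrow> (nat \<Rightarrow> nat) \<Rightarrow> (nat \<Rightarrow> nat list) \<Rightarrow> nat \<Rightarrow> nat \<Rightarrow> nat" where
  "edge_count L a b i j =
     card {k. k < L \<and> a k = i \<and> j \<in> set (b k)}
   + card {k. k < L \<and> a ((k + 1) mod L) = i \<and> j \<in> set (b k)}"

definition nb_multilabelling ::
  "nat \<Rightarrow> nat \<Rightarrow> nat \<Rightarrow> nat \<Rightarrow> nat \<Rightarrow> (nat \<Rightarrow> nat) \<Rightarrow> (nat \<Rightarrow> nat list) \<Rightarrow> bool" where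
  "nb_multilabelling p n d l L a b \<longleftrightarrow>
     d \<le> l \<and>
     (\<forall>k<L. a k \<in> {1..n}) \<and>
     (\<forall>k<L. length (b k) = d \<and> set (b k) \<subseteq> {1..p}) \<and>
     (\<forall>k<L. a k \<noteq> a ((k + 1) mod L)) \<and>
     (\<forall>k<L. set (b k) \<noteq> set (b ((k + 1) mod L))) \<and>
     (\<forall>i\<in>{1..n}. \<forall>j\<in>{1..p}. even (edge_count L a b i j))"

end

theory Submission
  imports Defs
begin

text \<open>Every label occurs at two or more positions of the cycle: an n-label used only at
  n-vertex k would make the parity condition force the two p-neighbours of that vertex to
  carry the same label set, which is backtracking; a p-label used only at p-vertex k would
  meet exactly one edge at the n-label of its left neighbour, since the right neighbour
  carries a different n-label. Double counting label occurrences then bounds the numbers r of n-labels and c of p-labels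
  by 2 r \<le> L and 2 c \<le> d L.\<close>

lemma double_card_UN_le_sum_card:
  assumes "finite I" and "\<And>i. i \<in> I \<Longrightarrow> finite (A i)"
    and "\<And>x. x \<in> (\<Union>i\<in>I. A i) \<Longrightarrow> \<exists>i\<in>I. \<exists>i'\<in>I. i \<noteq> i' \<and> x \<in> A i \<and> x \<in> A i'"
  shows "2 * card (\<Union>i\<in>I. A i) \<le> (\<Sum>i\<in>I. card (A i))"
proof -
  define U where "U = (\<Union>i\<in>I. A i)"
  have "finite U" using assms(1,2) by (simp add: U_def)
  have "(\<Sum>i\<in>I. card (A i)) = (\<Sum>i\<in>I. card {x\<in>U. x \<in> A i})"
    by (intro sum.cong refl arg_cong[where f = card]) (auto simp: U_def)
  also have "\<dots> = (\<Sum>x\<in>U. card {i\<in>I. x \<in> A i})"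
    by (rule sum_multicount_gen) (use assms(1) \<open>finite U\<close> in auto)
  also have "\<dots> \<ge> (\<Sum>x\<in>U. 2)"
  proof (rule sum_mono)
    fix x assume "x \<in> U"
    then obtain i i' where "i \<in> I" "i' \<in> I" "i \<noteq> i'" "x \<in> A i" "x \<in> A i'"
      using assms(3) \<open>x \<in> U\<close> unfolding U_def by blast
    then have "card {i, i'} \<le> card {i\<in>I. x \<in> A i}"
      by (intro card_mono) (use assms(1) in auto)
    then show "2 \<le> card {i\<in>I. x \<in> A i}" using \<open>i \<noteq> i'\<close> by simp
  qed
  finally show ?thesis by (simp add: U_def)
qed

lemma cyclic_succ_eq_iff:
  fixes L k k' :: nat
  assumes "k < L" and "k' < L"
  shows "(k' + 1) mod L = k \<longleftrightarrow> k' = (k + L - 1) mod L"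
  using assms
  by (cases "k' + 1 = L"; cases k) (auto simp: mod_if)

lemma nb_multilabelling_n_label_repeats:
  assumes nb: "nb_multilabelling p n d l L a b" and "k < L"
  shows "\<exists>k'<L. k' \<noteq> k \<and> a k' = a k"
proof (rule ccontr)
  assume "\<not> ?thesis"
  then have unique: "\<And>k'. k' < L \<Longrightarrow> a k' = a k \<longleftrightarrow> k' = k" by blast
  define k\<^sub>0 where "k\<^sub>0 = (k + L - 1) mod L"
  have "k\<^sub>0 < L" "(k\<^sub>0 + 1) mod L = k"
    using \<open>k < L\<close> cyclic_succ_eq_iff[OF \<open>k < L\<close>] by (auto simp: k\<^sub>0_def)
  have left_edges: "{k'. k' < L \<and> a k' = a k \<and> j \<in> set (b k')}
      = (if j \<in> set (b k) then {k} else {})" for j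
    using unique \<open>k < L\<close> by auto
  have "a ((k' + 1) mod L) = a k \<longleftrightarrow> k' = k\<^sub>0" if "k' < L" for k'
    using unique[of "(k' + 1) mod L"] cyclic_succ_eq_iff[OF \<open>k < L\<close> that] \<open>k < L\<close>
    by (simp add: k\<^sub>0_def)
  then have right_edges: "{k'. k' < L \<and> a ((k' + 1) mod L) = a k \<and> j \<in> set (b k')}
      = (if j \<in> set (b k\<^sub>0) then {k\<^sub>0} else {})" for j
    using \<open>k\<^sub>0 < L\<close> by auto
  have edge_count_eq: "edge_count L a b (a k) j = of_bool (j \<in> set (b k)) + of_bool (j \<in> set (b k\<^sub>0))"
    for j
    unfolding edge_count_def left_edges right_edges by simp
  have "j \<in> set (b k) \<longleftrightarrow> j \<in> set (b k\<^sub>0)" for j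
  proof (cases "j \<in> {1..p}")
    case True
    then have "even (edge_count L a b (a k) j)"
      using nb \<open>k < L\<close> unfolding nb_multilabelling_def by blast
    then show ?thesis by (auto simp: edge_count_eq)
  next
    case False
    then show ?thesis
      using nb \<open>k < L\<close> \<open>k\<^sub>0 < L\<close> unfolding nb_multilabelling_def by blast
  qed
  then have "set (b k\<^sub>0) = set (b ((k\<^sub>0 + 1) mod L))"
    using \<open>(k\<^sub>0 + 1) mod L = k\<close> by auto
  then show False using nb \<open>k\<^sub>0 < L\<close> unfolding nb_multilabelling_def by blast
qed

lemma nb_multilabelling_p_label_repeats:
  assumes nb: "nb_multilabelling p n d l L a b" and "k < L" and "j \<in> set (b k)"
  shows "\<exists>k'<L. k' \<noteq> k \<and> j \<in> set (b k')"
proof (rule ccontr)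
  assume "\<not> ?thesis"
  then have unique: "\<And>k'. k' < L \<Longrightarrow> j \<in> set (b k') \<longleftrightarrow> k' = k"
    using \<open>j \<in> set (b k)\<close> by blast
  have "a ((k + 1) mod L) \<noteq> a k"
    using nb \<open>k < L\<close> unfolding nb_multilabelling_def by force
  then have "{k'. k' < L \<and> a ((k' + 1) mod L) = a k \<and> j \<in> set (b k')} = {}"
    using unique by auto
  moreover have "{k'. k' < L \<and> a k' = a k \<and> j \<in> set (b k')} = {k}"
    using unique \<open>k < L\<close> by auto
  ultimately have "edge_count L a b (a k) j = 1"
    unfolding edge_count_def by simp
  moreover have "even (edge_count L a b (a k) j)"
    using nb \<open>k < L\<close> \<open>j \<in> set (b k)\<close> unfolding nb_multilabelling_def by blast
  ultimately show False by simp
qed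

lemma nb_multilabelling_card_n_labels:
  assumes "nb_multilabelling p n d l L a b"
  shows "2 * card (a ` {..<L}) \<le> L"
proof -
  have "2 * card (\<Union>k<L. {a k}) \<le> (\<Sum>k<L. card {a k})"
    by (rule double_card_UN_le_sum_card)
      (use nb_multilabelling_n_label_repeats[OF assms] in fastforce)+
  then show ?thesis by (simp add: UNION_singleton_eq_range)
qed

lemma nb_multilabelling_card_p_labels:
  assumes "nb_multilabelling p n d l L a b" and "\<forall>k<L. card (set (b k)) = d"
  shows "2 * card (\<Union>k<L. set (b k)) \<le> d * L"
proof -
  have "2 * card (\<Union>k<L. set (b k)) \<le> (\<Sum>k<L. card (set (b k)))"
    by (rule double_card_UN_le_sum_card)
      (use nb_multilabelling_p_label_repeats[OF assms(1)] in fastforce)+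
  also have "\<dots> = d * L" using assms(2) by simp
  finally show ?thesis .
qed

theorem lemma5p4:
  fixes p n d l L :: nat and a :: "nat \<Rightarrow> nat" and b :: "nat \<Rightarrow> nat list"
  assumes "0 < d" and "d \<le> l" and "2 \<le> L"
    and "nb_multilabelling p n d l L a b"
    and "\<forall>k<L. card (set (b k)) = d"
  shows "real (card (a ` {..<L})) + real (card (\<Union>k<L. set (b k))) / real l
           \<le> real L / 2 + real d * real L / (2 * real l)"
proof -
  have "0 < real l" using assms(1,2) by simp
  have "real (card (a ` {..<L})) \<le> real L / 2"
    using nb_multilabelling_card_n_labels[OF assms(4)] by linarith
  moreover have "2 * real (card (\<Union>k<L. set (b k))) \<le> real d * real L"
    using nb_multilabelling_card_p_labels[OF assms(4,5)]
    by (metis of_nat_le_iff of_nat_mult of_nat_numeral)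
  then have "real (card (\<Union>k<L. set (b k))) / real l \<le> real d * real L / (2 * real l)"
    using \<open>0 < real l\<close> by (simp add: field_simps)
  ultimately show ?thesis by linarith
qed

end
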